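(* Let $X\colon\mathcal H\leftarrow\mathcal G$ be a groupoid correspondence, let $V_1,V_2\subseteq X$, $W\subseteq\mathcal G$, $Z\subseteq\mathcal H$ be slices, and let $\xi\in C_c(V_1)$, $\eta\in C_c(V_2)$, $\gamma\in C_c(W)$, $\zeta\in C_c(Z)$ (extended by zero). Then $V_1W=\{xg:x\in V_1,g\in W,s(x)=r(g)\}\subseteq X$, $\langle V_1|V_2\rangle=\{\langle x_1|x_2\rangle:x_1\in V_1,x_2\in V_2,p(x_1)=p(x_2)\}\subseteq\mathcal G$ and $ZV_1=\{hx:h\in Z,x\in V_1,s(h)=r(x)\}\subseteq X$ are slices. For $y\in V_1W$ there are unique $x\in V_1$, $g\in W$ with $xg=y$, and $\xi*\gamma\in C_c(V_1W)$ with $(\xi*\gamma)(y)=\xi(x)\gamma(g)$. For $g\in\langle V_1|V_2\rangle$ there are unique $x_1\in V_1$, $x_2\in V_2$ with $g=\langle x_1|x_2\rangle$, and $\langle\xi|\eta\rangle\in C_c(\langle V_1|V_2\rangle)$ with $\langle\xi|\eta\rangle(g)=\overline{\xi(x_1)}\eta(x_2)$. For $y\in ZV_1$ there are unique $h\in Z$, $x\in V_1$ with $y=hx$, and $\zeta*\xi\in C_c(ZV_1)$ with $(\zeta*\xi)(y)=\zeta(h)\xi(x)$.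
   Context: Groupoids are étale ($r,s$ local homeomorphisms, continuous multiplication and inversion) with Hausdorff locally compact object space. A groupoid correspondence $X\colon\mathcal H\leftarrow\mathcal G$: space with commuting continuous left $\mathcal H$-action (anchor $r$) and right $\mathcal G$-action (anchor $s$), $s$ a local homeomorphism, right action free and proper. $p\colon X\to X/\mathcal G$ is the orbit projection; for $p(x_1)=p(x_2)$, $\langle x_1|x_2\rangle$ is the unique $g\in\mathcal G$ with $s(x_1)=r(g)$, $x_2=x_1g$. A slice of $\mathcal G$ is an open $V\subseteq\mathcal G$ on which $s$ and $r$ are injective; a slice of $X$ is an open $V\subseteq X$ on which $s$ and $p$ are injective. The operations are $\xi*\gamma(x)=\sum_{g\in\mathcal G^{s(x)}}\xi(xg)\gamma(g^{-1})$, $\langle\xi|\eta\rangle(g)=\sum_{x:\,s(x)=r(g)}\overline{\xi(x)}\eta(xg)$, $\zeta*\xi(x)=\sum_{h\in\mathcal H^{r(x)}}\zeta(h)\xi(h^{-1}x)$, where $\mathcal G^{y}=r^{-1}(y)$. *)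

theory Defs
  imports "HOL-Analysis.Analysis"
begin

text \<open>A groupoid with arrow space 'g and object space 'u. Composition convention:
  mult G g h (written gh) is defined iff src G g = rng G h.\<close>

record ('g, 'u) groupoid =
  rng  :: "'g \<Rightarrow> 'u"
  src  :: "'g \<Rightarrow> 'u"
  mult :: "'g \<Rightarrow> 'g \<Rightarrow> 'g"
  ginv :: "'g \<Rightarrow> 'g"
  uni  :: "'u \<Rightarrow> 'g"

definition local_homeo :: "('a::topological_space \<Rightarrow> 'b::topological_space) \<Rightarrow> bool" where
  "local_homeo f \<longleftrightarrow>
     (\<forall>x. \<exists>U. open U \<and> x \<in> U \<and> open (f ` U) \<and> homeomorphism U (f ` U) f (inv_into U f))"

definition etale_groupoid :: "('g::topological_space, 'u::t2_space) groupoid \<Rightarrow> bool" where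
  "etale_groupoid G \<longleftrightarrow>
     (\<forall>g h. src G g = rng G h \<longrightarrow>
        rng G (mult G g h) = rng G g \<and> src G (mult G g h) = src G h) \<and>
     (\<forall>f g h. src G f = rng G g \<and> src G g = rng G h \<longrightarrow>
        mult G (mult G f g) h = mult G f (mult G g h)) \<and>
     (\<forall>u. rng G (uni G u) = u \<and> src G (uni G u) = u) \<and>
     (\<forall>g. mult G (uni G (rng G g)) g = g \<and> mult G g (uni G (src G g)) = g) \<and>
     (\<forall>g. rng G (ginv G g) = src G g \<and> src G (ginv G g) = rng G g \<and>
          mult G g (ginv G g) = uni G (rng G g) \<and> mult G (ginv G g) g = uni G (src G g)) \<and>
     locally_compact_space (euclidean :: 'u topology) \<and>
     local_homeo (rng G) \<and> local_homeo (src G) \<and>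
     continuous_on {(g, h). src G g = rng G h} (\<lambda>(g, h). mult G g h) \<and>
     continuous_on UNIV (ginv G) \<and>
     continuous_on UNIV (uni G)"

record ('x, 'h, 'b, 'g, 'a) corresp =
  anc_r :: "'x \<Rightarrow> 'b"
  anc_s :: "'x \<Rightarrow> 'a"
  lact  :: "'h \<Rightarrow> 'x \<Rightarrow> 'x"
  ract  :: "'x \<Rightarrow> 'g \<Rightarrow> 'x"

definition groupoid_corresp ::
  "('h::topological_space, 'b::t2_space) groupoid \<Rightarrow> ('g::topological_space, 'a::t2_space) groupoid
   \<Rightarrow> ('x::topological_space, 'h, 'b, 'g, 'a) corresp \<Rightarrow> bool" where
  "groupoid_corresp H G X \<longleftrightarrow>
     etale_groupoid H \<and> etale_groupoid G \<and>
     \<comment> \<open>left H-action with anchor anc_r\<close>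
     (\<forall>h x. src H h = anc_r X x \<longrightarrow>
        anc_r X (lact X h x) = rng H h \<and> anc_s X (lact X h x) = anc_s X x) \<and>
     (\<forall>h1 h2 x. src H h1 = rng H h2 \<and> src H h2 = anc_r X x \<longrightarrow>
        lact X h1 (lact X h2 x) = lact X (mult H h1 h2) x) \<and>
     (\<forall>x. lact X (uni H (anc_r X x)) x = x) \<and>
     \<comment> \<open>right G-action with anchor anc_s\<close>
     (\<forall>x g. anc_s X x = rng G g \<longrightarrow>
        anc_s X (ract X x g) = src G g \<and> anc_r X (ract X x g) = anc_r X x) \<and>
     (\<forall>x g1 g2. anc_s X x = rng G g1 \<and> src G g1 = rng G g2 \<longrightarrow>
        ract X (ract X x g1) g2 = ract X x (mult G g1 g2)) \<and>
     (\<forall>x. ract X x (uni G (anc_s X x)) = x) \<and>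
     \<comment> \<open>the actions commute\<close>
     (\<forall>h x g. src H h = anc_r X x \<and> anc_s X x = rng G g \<longrightarrow>
        ract X (lact X h x) g = lact X h (ract X x g)) \<and>
     \<comment> \<open>continuity\<close>
     continuous_on UNIV (anc_r X) \<and> continuous_on UNIV (anc_s X) \<and>
     continuous_on {(h, x). src H h = anc_r X x} (\<lambda>(h, x). lact X h x) \<and>
     continuous_on {(x, g). anc_s X x = rng G g} (\<lambda>(x, g). ract X x g) \<and>
     \<comment> \<open>s is a local homeomorphism\<close>
     local_homeo (anc_s X) \<and>
     \<comment> \<open>the right action is free\<close>
     (\<forall>x g. anc_s X x = rng G g \<and> ract X x g = x \<longrightarrow> g = uni G (anc_s X x)) \<and>
     \<comment> \<open>the right action is proper: (x,g) |-> (xg, x) is a proper map (Bourbaki)\<close>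
     proper_map (subtopology euclidean {(x, g). anc_s X x = rng G g}) euclidean
        (\<lambda>(x, g). (ract X x g, x))"

text \<open>p(x1) = p(x2) for the orbit projection p : X -> X/G.\<close>
definition same_orbit :: "('g, 'u) groupoid \<Rightarrow> ('x, 'h, 'b, 'g, 'u) corresp \<Rightarrow> 'x \<Rightarrow> 'x \<Rightarrow> bool" where
  "same_orbit G X x1 x2 \<longleftrightarrow> (\<exists>g. anc_s X x1 = rng G g \<and> x2 = ract X x1 g)"

definition bra :: "('g, 'u) groupoid \<Rightarrow> ('x, 'h, 'b, 'g, 'u) corresp \<Rightarrow> 'x \<Rightarrow> 'x \<Rightarrow> 'g" where
  "bra G X x1 x2 = (THE g. anc_s X x1 = rng G g \<and> x2 = ract X x1 g)"

definition gslice :: "('g::topological_space, 'u) groupoid \<Rightarrow> 'g set \<Rightarrow> bool" where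
  "gslice G W \<longleftrightarrow> open W \<and> inj_on (src G) W \<and> inj_on (rng G) W"

definition xslice :: "('g, 'u) groupoid \<Rightarrow> ('x::topological_space, 'h, 'b, 'g, 'u) corresp \<Rightarrow> 'x set \<Rightarrow> bool" where
  "xslice G X V \<longleftrightarrow> open V \<and> inj_on (anc_s X) V \<and>
     (\<forall>x1\<in>V. \<forall>x2\<in>V. same_orbit G X x1 x2 \<longrightarrow> x1 = x2)"

text \<open>C_c(V), functions extended by zero outside V.\<close>
definition cc_on :: "'a::topological_space set \<Rightarrow> ('a \<Rightarrow> complex) \<Rightarrow> bool" where
  "cc_on V f \<longleftrightarrow> continuous_on V f \<and>
     (\<exists>K. compact K \<and> K \<subseteq> V \<and> (\<forall>x. x \<notin> K \<longrightarrow> f x = 0))"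

definition xg_set :: "('g, 'u) groupoid \<Rightarrow> ('x, 'h, 'b, 'g, 'u) corresp \<Rightarrow> 'x set \<Rightarrow> 'g set \<Rightarrow> 'x set" where
  "xg_set G X V W = {ract X x g | x g. x \<in> V \<and> g \<in> W \<and> anc_s X x = rng G g}"

definition bra_set :: "('g, 'u) groupoid \<Rightarrow> ('x, 'h, 'b, 'g, 'u) corresp \<Rightarrow> 'x set \<Rightarrow> 'x set \<Rightarrow> 'g set" where
  "bra_set G X V1 V2 = {bra G X x1 x2 | x1 x2. x1 \<in> V1 \<and> x2 \<in> V2 \<and> same_orbit G X x1 x2}"

definition hx_set :: "('h, 'b) groupoid \<Rightarrow> ('x, 'h, 'b, 'g, 'u) corresp \<Rightarrow> 'h set \<Rightarrow> 'x set \<Rightarrow> 'x set" where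
  "hx_set H X Z V = {lact X h x | h x. h \<in> Z \<and> x \<in> V \<and> src H h = anc_r X x}"

definition conv_r :: "('g, 'u) groupoid \<Rightarrow> ('x, 'h, 'b, 'g, 'u) corresp
    \<Rightarrow> ('x \<Rightarrow> complex) \<Rightarrow> ('g \<Rightarrow> complex) \<Rightarrow> 'x \<Rightarrow> complex" where
  "conv_r G X xi gamma = (\<lambda>x. infsum (\<lambda>g. xi (ract X x g) * gamma (ginv G g)) {g. rng G g = anc_s X x})"

definition inner_prod :: "('g, 'u) groupoid \<Rightarrow> ('x, 'h, 'b, 'g, 'u) corresp
    \<Rightarrow> ('x \<Rightarrow> complex) \<Rightarrow> ('x \<Rightarrow> complex) \<Rightarrow> 'g \<Rightarrow> complex" where
  "inner_prod G X xi eta = (\<lambda>g. infsum (\<lambda>x. cnj (xi x) * eta (ract X x g)) {x. anc_s X x = rng G g})"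

definition conv_l :: "('h, 'b) groupoid \<Rightarrow> ('x, 'h, 'b, 'g, 'u) corresp
    \<Rightarrow> ('h \<Rightarrow> complex) \<Rightarrow> ('x \<Rightarrow> complex) \<Rightarrow> 'x \<Rightarrow> complex" where
  "conv_l H X zeta xi = (\<lambda>x. infsum (\<lambda>h. zeta h * xi (lact X (ginv H h) x)) {h. rng H h = anc_r X x})"

end

theory Submission
  imports Defs
begin

(*
  Each product set carries continuous factor maps, defined on an open set, that split its
  elements uniquely. For y in V1 W the factor g is the preimage of s(y) under the local
  homeomorphism s restricted to the slice W, and x = y g^-1; for g in <V1|V2>, x1 is the preimage
  of r(g) under s restricted to V1, and x2 = x1 g; for y in Z V1, h is the preimage of r(y) under
  r restricted to Z, and x = h^-1 y. The factor maps exhibit the product sets as open and reduce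
  their slice properties to those of the factors. They also show that each sum defining the three
  operations has at most one nonzero term, the product of the values at the factors. The supports
  are compact because they lie in the image of a product of compact supports under the continuous
  action or, for <xi|eta>, in the projection of the compact preimage of such a product under the
  proper map (x, g) |-> (x g, x).
*)

lemma local_homeo_continuous:
  assumes "local_homeo f"
  shows "continuous_on UNIV f"
proof -
  obtain U where U: "\<And>x. open (U x) \<and> x \<in> U x \<and> homeomorphism (U x) (f ` U x) f (inv_into (U x) f)"
    using assms unfolding local_homeo_def by metis
  have "continuous_on (\<Union>x. U x) f"
    by (rule continuous_on_open_UN) (use U homeomorphism_def in blast)+
  moreover have "(\<Union>x. U x) = UNIV"
    using U by blast
  ultimately show ?thesis
    by simp
qed

lemma local_homeo_open_map:
  assumes "local_homeo f" and "open S"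
  shows "open (f ` S)"
proof -
  obtain U where U: "\<And>x. open (U x) \<and> x \<in> U x \<and> open (f ` U x) \<and>
      homeomorphism (U x) (f ` U x) f (inv_into (U x) f)"
    using assms(1) unfolding local_homeo_def by metis
  have "open (f ` (U x \<inter> S))" for x
  proof -
    have "openin (top_of_set (U x)) (U x \<inter> S)"
      using assms(2) openin_open_Int by blast
    then have "openin (top_of_set (f ` U x)) (f ` (U x \<inter> S))"
      using homeomorphism_imp_open_map U by blast
    then show ?thesis
      using openin_open_trans U by blast
  qed
  moreover have "f ` S = (\<Union>x\<in>S. f ` (U x \<inter> S))"
    using U by blast
  ultimately show ?thesis
    by (metis open_UN)
qed

lemma local_homeo_inv_into_continuous:
  assumes "local_homeo f" and "open V" and "inj_on f V"
  shows "continuous_on (f ` V) (inv_into V f)"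
proof (rule continuous_on_inverse_open_map[OF _ refl])
  show "continuous_on V f"
    using local_homeo_continuous[OF assms(1)] continuous_on_subset by blast
  show "inv_into V f (f x) = x" if "x \<in> V" for x
    using assms(3) that by simp
  fix U assume "openin (top_of_set V) U"
  then have "open U" "U \<subseteq> V"
    using assms(2) openin_open_trans openin_imp_subset by blast+
  then show "openin (top_of_set (f ` V)) (f ` U)"
    by (simp add: open_subset image_mono local_homeo_open_map[OF assms(1)])
qed

lemma continuous_on_apply_pair:
  assumes "continuous_on T (\<lambda>(x, y). F x y)" and "continuous_on S a" and "continuous_on S b"
    and "\<And>z. z \<in> S \<Longrightarrow> (a z, b z) \<in> T"
  shows "continuous_on S (\<lambda>z. F (a z) (b z))"
  using continuous_on_compose2[OF assms(1) continuous_on_Pair[OF assms(2,3)]] assms(4) by auto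

lemma closed_fibre_product:
  fixes f :: "'a::topological_space \<Rightarrow> 'c::t2_space" and g :: "'b::topological_space \<Rightarrow> 'c"
  assumes "continuous_on UNIV f" and "continuous_on UNIV g"
  shows "closed {(x, y). f x = g y}"
proof -
  have "continuous_on UNIV (\<lambda>p. f (fst p))" "continuous_on UNIV (\<lambda>p. g (snd p))"
    by (rule continuous_on_compose2[OF assms(1) continuous_on_fst[OF continuous_on_id]], simp,
        rule continuous_on_compose2[OF assms(2) continuous_on_snd[OF continuous_on_id]], simp)
  then show ?thesis
    using closed_Collect_eq by (simp add: case_prod_beta')
qed

lemma compact_image_fibre_product:
  fixes f :: "'a::topological_space \<Rightarrow> 'c::t2_space" and g :: "'b::topological_space \<Rightarrow> 'c"
  assumes "compact K" and "compact L" and "continuous_on UNIV f" and "continuous_on UNIV g"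
    and "continuous_on {(x, y). f x = g y} m"
  shows "compact (m ` (K \<times> L \<inter> {(x, y). f x = g y}))"
  using compact_Int_closed[OF compact_Times[OF assms(1,2)] closed_fibre_product[OF assms(3,4)]]
    assms(5) by (meson compact_continuous_image continuous_on_subset inf_le2)

lemma infsum_eq_single_term:
  assumes "a \<in> A" and "\<And>k. k \<in> A \<Longrightarrow> k \<noteq> a \<Longrightarrow> f k = 0"
  shows "infsum f A = f a"
proof -
  have "infsum f A = infsum f {a}"
    by (rule infsum_cong_neutral) (use assms in auto)
  then show ?thesis
    by simp
qed

lemma cc_on_continuous: "cc_on V f \<Longrightarrow> continuous_on V f"
  unfolding cc_on_def by blast

lemma cc_on_vanishes: "cc_on V f \<Longrightarrow> x \<notin> V \<Longrightarrow> f x = 0"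
  unfolding cc_on_def by blast

lemma cc_onE:
  assumes "cc_on V f"
  obtains K where "compact K" "K \<subseteq> V" "\<And>x. f x \<noteq> 0 \<Longrightarrow> x \<in> K"
  using assms unfolding cc_on_def by blast

lemma cc_onI:
  assumes "continuous_on V f" and "compact K" and "K \<subseteq> V" and "\<And>x. f x \<noteq> 0 \<Longrightarrow> x \<in> K"
  shows "cc_on V f"
  using assms unfolding cc_on_def by blast

lemma gsliceD:
  assumes "gslice G W"
  shows "open W" "inj_on (src G) W" "inj_on (rng G) W"
  using assms unfolding gslice_def by blast+

lemma xsliceD:
  assumes "xslice G X V"
  shows "open V" "inj_on (anc_s X) V" "\<And>x1 x2. x1 \<in> V \<Longrightarrow> x2 \<in> V \<Longrightarrow> same_orbit G X x1 x2 \<Longrightarrow> x1 = x2"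
  using assms unfolding xslice_def by blast+

locale etale =
  fixes G :: "('g::topological_space, 'u::t2_space) groupoid"
  assumes etale: "etale_groupoid G"
begin

lemma rng_mult: "src G g = rng G h \<Longrightarrow> rng G (mult G g h) = rng G g"
  using etale unfolding etale_groupoid_def by blast

lemma mult_assoc:
  "src G f = rng G g \<Longrightarrow> src G g = rng G h \<Longrightarrow> mult G (mult G f g) h = mult G f (mult G g h)"
  using etale unfolding etale_groupoid_def by blast

lemma mult_uni_left: "mult G (uni G (rng G g)) g = g"
  and mult_uni_right: "mult G g (uni G (src G g)) = g"
  using etale unfolding etale_groupoid_def by blast+

lemma rng_ginv [simp]: "rng G (ginv G g) = src G g"
  and src_ginv [simp]: "src G (ginv G g) = rng G g"
  and mult_ginv_right: "mult G g (ginv G g) = uni G (rng G g)"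
  and mult_ginv_left: "mult G (ginv G g) g = uni G (src G g)"
  using etale unfolding etale_groupoid_def by blast+

lemma ginv_ginv [simp]: "ginv G (ginv G g) = g"
proof -
  let ?k = "ginv G (ginv G g)"
  have "?k = mult G ?k (mult G (ginv G g) g)"
    using mult_uni_right[of ?k] mult_ginv_left[of g] by simp
  also have "\<dots> = mult G (mult G ?k (ginv G g)) g"
    using mult_assoc by simp
  also have "\<dots> = g"
    using mult_ginv_left[of "ginv G g"] mult_uni_left[of g] by simp
  finally show ?thesis .
qed

lemma local_homeo_rng: "local_homeo (rng G)"
  and local_homeo_src: "local_homeo (src G)"
  and continuous_ginv: "continuous_on UNIV (ginv G)"
  using etale unfolding etale_groupoid_def by blast+

lemmas continuous_rng = local_homeo_continuous[OF local_homeo_rng]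
lemmas continuous_src = local_homeo_continuous[OF local_homeo_src]

end

locale correspondence =
  fixes H :: "('h::topological_space, 'b::t2_space) groupoid"
    and G :: "('g::topological_space, 'a::t2_space) groupoid"
    and X :: "('x::topological_space, 'h, 'b, 'g, 'a) corresp"
  assumes corresp: "groupoid_corresp H G X"
begin

sublocale G: etale G
  using corresp unfolding groupoid_corresp_def etale_def by blast

sublocale H: etale H
  using corresp unfolding groupoid_corresp_def etale_def by blast

lemma anc_r_lact: "src H h = anc_r X x \<Longrightarrow> anc_r X (lact X h x) = rng H h"
  and anc_s_lact: "src H h = anc_r X x \<Longrightarrow> anc_s X (lact X h x) = anc_s X x"
  and lact_lact: "src H h1 = rng H h2 \<Longrightarrow> src H h2 = anc_r X x \<Longrightarrow>
      lact X h1 (lact X h2 x) = lact X (mult H h1 h2) x"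
  and lact_uni: "lact X (uni H (anc_r X x)) x = x"
  and anc_s_ract: "anc_s X x = rng G g \<Longrightarrow> anc_s X (ract X x g) = src G g"
  and anc_r_ract: "anc_s X x = rng G g \<Longrightarrow> anc_r X (ract X x g) = anc_r X x"
  and ract_ract: "anc_s X x = rng G g1 \<Longrightarrow> src G g1 = rng G g2 \<Longrightarrow>
      ract X (ract X x g1) g2 = ract X x (mult G g1 g2)"
  and ract_uni: "ract X x (uni G (anc_s X x)) = x"
  and ract_lact_commute: "src H h = anc_r X x \<Longrightarrow> anc_s X x = rng G g \<Longrightarrow>
      ract X (lact X h x) g = lact X h (ract X x g)"
  and ract_free: "anc_s X x = rng G g \<Longrightarrow> ract X x g = x \<Longrightarrow> g = uni G (anc_s X x)"
  using corresp unfolding groupoid_corresp_def by (elim conjE; simp)+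

lemma continuous_anc_r: "continuous_on UNIV (anc_r X)"
  and continuous_anc_s: "continuous_on UNIV (anc_s X)"
  and continuous_lact: "continuous_on {(h, x). src H h = anc_r X x} (\<lambda>(h, x). lact X h x)"
  and continuous_ract: "continuous_on {(x, g). anc_s X x = rng G g} (\<lambda>(x, g). ract X x g)"
  and local_homeo_anc_s: "local_homeo (anc_s X)"
  and proper_ract: "proper_map (subtopology euclidean {(x, g). anc_s X x = rng G g}) euclidean
      (\<lambda>(x, g). (ract X x g, x))"
  using corresp unfolding groupoid_corresp_def by (elim conjE; simp)+

lemma ract_ract_ginv: "anc_s X x = rng G g \<Longrightarrow> ract X (ract X x g) (ginv G g) = x"
  using ract_ract[of x g "ginv G g"] G.mult_ginv_right[of g] ract_uni[of x] by simp

lemma ract_ginv_ract: "anc_s X y = src G g \<Longrightarrow> ract X (ract X y (ginv G g)) g = y"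
  using ract_ract_ginv[of y "ginv G g"] by simp

lemma lact_ginv_lact: "src H h = anc_r X x \<Longrightarrow> lact X (ginv H h) (lact X h x) = x"
  using lact_lact[of "ginv H h" h x] H.mult_ginv_left[of h] lact_uni[of x] by simp

lemma lact_lact_ginv: "anc_r X y = rng H h \<Longrightarrow> lact X h (lact X (ginv H h) y) = y"
  using lact_ginv_lact[of "ginv H h" y] by simp

lemma ract_cancel:
  assumes "anc_s X x = rng G a" and "anc_s X x = rng G b" and "ract X x a = ract X x b"
  shows "a = b"
proof -
  have src_eq: "src G a = src G b"
    using assms anc_s_ract by metis
  have "ract X x (mult G a (ginv G b)) = ract X (ract X x a) (ginv G b)"
    using ract_ract[of x a "ginv G b"] assms src_eq by simp
  also have "\<dots> = x"
    using assms ract_ract_ginv by metis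
  finally have "mult G a (ginv G b) = uni G (rng G b)"
    using ract_free G.rng_mult assms src_eq by (metis G.rng_ginv)
  then have "mult G (mult G a (ginv G b)) b = b"
    using G.mult_uni_left by simp
  then show ?thesis
    using G.mult_assoc[of a "ginv G b" b] G.mult_ginv_left[of b] G.mult_uni_right[of a] src_eq by simp
qed

lemma same_orbitI: "anc_s X x = rng G g \<Longrightarrow> same_orbit G X x (ract X x g)"
  unfolding same_orbit_def by blast

lemma bra_ract: "anc_s X x = rng G g \<Longrightarrow> bra G X x (ract X x g) = g"
  unfolding bra_def by (rule the_equality) (auto intro: ract_cancel)

lemma same_orbit_bra:
  "same_orbit G X x y \<Longrightarrow> anc_s X x = rng G (bra G X x y) \<and> y = ract X x (bra G X x y)"
  unfolding same_orbit_def using bra_ract by metis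

lemma same_orbit_sym: "same_orbit G X x y \<Longrightarrow> same_orbit G X y x"
  unfolding same_orbit_def by (metis ract_ract_ginv anc_s_ract G.rng_ginv)

lemma same_orbit_trans: "same_orbit G X x y \<Longrightarrow> same_orbit G X y z \<Longrightarrow> same_orbit G X x z"
  unfolding same_orbit_def by (metis ract_ract anc_s_ract G.rng_mult)

lemma compact_ract_preimage:
  assumes "compact K" and "compact L"
  shows "compact {(x, g). anc_s X x = rng G g \<and> ract X x g \<in> K \<and> x \<in> L}"
proof -
  let ?F = "{(x, g). anc_s X x = rng G g}"
  have "compactin (subtopology euclidean ?F)
      {p \<in> topspace (subtopology euclidean ?F). (\<lambda>(x, g). (ract X x g, x)) p \<in> K \<times> L}"
    using compactin_proper_map_preimage[OF proper_ract] assms by (simp add: compact_Times)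
  then show ?thesis
    by (simp add: compactin_subtopology case_prod_beta' conj_commute)
qed

end

locale xg_product = correspondence H G X
  for H :: "('h::topological_space, 'b::t2_space) groupoid"
    and G :: "('g::topological_space, 'a::t2_space) groupoid"
    and X :: "('x::topological_space, 'h, 'b, 'g, 'a) corresp" +
  fixes V :: "'x set" and W :: "'g set"
  assumes xslice_V: "xslice G X V" and gslice_W: "gslice G W"
begin

definition xg_right :: "'x \<Rightarrow> 'g" where
  "xg_right y = inv_into W (src G) (anc_s X y)"

definition xg_left :: "'x \<Rightarrow> 'x" where
  "xg_left y = ract X y (ginv G (xg_right y))"

lemma xg_factors_ract:
  assumes "g \<in> W" and "anc_s X x = rng G g"
  shows "xg_right (ract X x g) = g" and "xg_left (ract X x g) = x"
proof -
  show right: "xg_right (ract X x g) = g"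
    using assms anc_s_ract gsliceD(2)[OF gslice_W] by (simp add: xg_right_def)
  show "xg_left (ract X x g) = x"
    using assms ract_ract_ginv by (simp add: xg_left_def right)
qed

lemma ract_xg_factors:
  assumes "anc_s X y \<in> src G ` W"
  shows "xg_right y \<in> W" and "src G (xg_right y) = anc_s X y"
    and "anc_s X (xg_left y) = rng G (xg_right y)" and "ract X (xg_left y) (xg_right y) = y"
proof -
  show "xg_right y \<in> W" and src: "src G (xg_right y) = anc_s X y"
    using assms by (simp_all add: xg_right_def inv_into_into f_inv_into_f)
  then show "anc_s X (xg_left y) = rng G (xg_right y)" "ract X (xg_left y) (xg_right y) = y"
    by (simp_all add: xg_left_def anc_s_ract ract_ginv_ract)
qed

lemma xg_set_eq: "xg_set G X V W = {y \<in> anc_s X -` (src G ` W). xg_left y \<in> V}"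
proof (intro equalityI subsetI)
  fix y assume "y \<in> xg_set G X V W"
  then obtain x g where "x \<in> V" "g \<in> W" "anc_s X x = rng G g" "y = ract X x g"
    unfolding xg_set_def by blast
  then show "y \<in> {y \<in> anc_s X -` (src G ` W). xg_left y \<in> V}"
    using xg_factors_ract anc_s_ract by auto
next
  fix y assume "y \<in> {y \<in> anc_s X -` (src G ` W). xg_left y \<in> V}"
  then show "y \<in> xg_set G X V W"
    using ract_xg_factors[of y] unfolding xg_set_def by force
qed

lemma xg_set_factors:
  assumes "y \<in> xg_set G X V W"
  shows "xg_left y \<in> V" "xg_right y \<in> W" "anc_s X (xg_left y) = rng G (xg_right y)"
    "ract X (xg_left y) (xg_right y) = y"
  using assms ract_xg_factors unfolding xg_set_eq by auto

lemma continuous_on_xg_right: "continuous_on (anc_s X -` (src G ` W)) xg_right"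
  unfolding xg_right_def
  by (rule continuous_on_compose2[OF local_homeo_inv_into_continuous[OF G.local_homeo_src]
        continuous_on_subset[OF continuous_anc_s]])
     (use gsliceD[OF gslice_W] in auto)

lemma continuous_on_xg_left: "continuous_on (anc_s X -` (src G ` W)) xg_left"
  unfolding xg_left_def
proof (rule continuous_on_apply_pair[OF continuous_ract continuous_on_id])
  show "continuous_on (anc_s X -` (src G ` W)) (\<lambda>y. ginv G (xg_right y))"
    by (rule continuous_on_compose2[OF G.continuous_ginv continuous_on_xg_right]) auto
qed (use ract_xg_factors in auto)

lemma open_xg_set: "open (xg_set G X V W)"
  unfolding xg_set_eq
  using continuous_on_open_vimage[THEN iffD1, OF _ continuous_on_xg_left] xsliceD(1)[OF xslice_V]
    open_vimage[OF local_homeo_open_map[OF G.local_homeo_src gsliceD(1)[OF gslice_W]] continuous_anc_s]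
  by (simp add: Collect_conj_eq Int_commute vimage_def)

lemma xg_set_unique_factors:
  assumes "y \<in> xg_set G X V W"
  shows "\<exists>!(x, g). x \<in> V \<and> g \<in> W \<and> anc_s X x = rng G g \<and> ract X x g = y"
proof (rule ex1I[of _ "(xg_left y, xg_right y)"])
  show "case (xg_left y, xg_right y) of (x, g) \<Rightarrow> x \<in> V \<and> g \<in> W \<and> anc_s X x = rng G g \<and> ract X x g = y"
    using xg_set_factors[OF assms] by simp
qed (use xg_factors_ract in auto)

lemma xslice_xg_set: "xslice G X (xg_set G X V W)"
  unfolding xslice_def
proof (intro conjI ballI impI)
  show "open (xg_set G X V W)"
    by (rule open_xg_set)
  have factors_eq: "y = y'"
    if "y \<in> xg_set G X V W" "y' \<in> xg_set G X V W" "xg_left y = xg_left y'" "xg_right y = xg_right y'"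
    for y y'
    using that xg_set_factors(4) by metis
  show "inj_on (anc_s X) (xg_set G X V W)"
  proof (rule inj_onI)
    fix y y' assume y: "y \<in> xg_set G X V W" "y' \<in> xg_set G X V W" and "anc_s X y = anc_s X y'"
    then have "xg_right y = xg_right y'"
      by (simp add: xg_right_def)
    moreover have "xg_left y = xg_left y'"
      using inj_onD[OF xsliceD(2)[OF xslice_V]] xg_set_factors[OF y(1)] xg_set_factors[OF y(2)]
        \<open>xg_right y = xg_right y'\<close> by metis
    ultimately show "y = y'"
      using factors_eq y by blast
  qed
  fix y y' assume y: "y \<in> xg_set G X V W" "y' \<in> xg_set G X V W" and "same_orbit G X y y'"
  have "same_orbit G X (xg_left y) y" "same_orbit G X y' (xg_left y')"
    using xg_set_factors[OF y(1)] xg_set_factors[OF y(2)] same_orbitI same_orbit_sym by metis+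
  then have "same_orbit G X (xg_left y) (xg_left y')"
    using \<open>same_orbit G X y y'\<close> same_orbit_trans by blast
  then have left: "xg_left y = xg_left y'"
    using xsliceD(3)[OF xslice_V] xg_set_factors(1) y by blast
  then have "xg_right y = xg_right y'"
    using inj_onD[OF gsliceD(3)[OF gslice_W]] xg_set_factors[OF y(1)] xg_set_factors[OF y(2)] by metis
  then show "y = y'"
    using factors_eq y left by blast
qed

lemma conv_r_ract:
  assumes gamma: "cc_on W gamma" and "g \<in> W" and "anc_s X x = rng G g"
  shows "conv_r G X xi gamma (ract X x g) = xi x * gamma g"
proof -
  have "conv_r G X xi gamma (ract X x g) = xi (ract X (ract X x g) (ginv G g)) * gamma (ginv G (ginv G g))"
    unfolding conv_r_def
  proof (rule infsum_eq_single_term)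
    show "ginv G g \<in> {k. rng G k = anc_s X (ract X x g)}"
      using assms anc_s_ract by simp
    fix k assume k: "k \<in> {k. rng G k = anc_s X (ract X x g)}" "k \<noteq> ginv G g"
    have "ginv G k \<notin> W"
    proof
      assume "ginv G k \<in> W"
      moreover have "src G (ginv G k) = src G g"
        using k assms anc_s_ract by simp
      ultimately have "ginv G k = g"
        using inj_onD[OF gsliceD(2)[OF gslice_W]] \<open>g \<in> W\<close> by blast
      then show False
        using k G.ginv_ginv by metis
    qed
    then show "xi (ract X (ract X x g) k) * gamma (ginv G k) = 0"
      using cc_on_vanishes[OF gamma] by simp
  qed
  then show ?thesis
    using assms ract_ract_ginv by simp
qed

lemma conv_r_outside:
  assumes xi: "cc_on V xi" and gamma: "cc_on W gamma" and "y \<notin> xg_set G X V W"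
  shows "conv_r G X xi gamma y = 0"
  unfolding conv_r_def
proof (rule infsum_0)
  fix k assume k: "k \<in> {k. rng G k = anc_s X y}"
  have "ract X y k \<notin> V \<or> ginv G k \<notin> W"
  proof (rule ccontr)
    assume "\<not> (ract X y k \<notin> V \<or> ginv G k \<notin> W)"
    moreover have "anc_s X (ract X y k) = rng G (ginv G k)" "ract X (ract X y k) (ginv G k) = y"
      using k anc_s_ract ract_ract_ginv by simp_all
    ultimately have "y \<in> xg_set G X V W"
      unfolding xg_set_def by force
    then show False
      using assms(3) by blast
  qed
  then show "xi (ract X y k) * gamma (ginv G k) = 0"
    using cc_on_vanishes[OF xi] cc_on_vanishes[OF gamma] by auto
qed

lemma conv_r_xg_set:
  assumes "cc_on W gamma" and "y \<in> xg_set G X V W"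
  shows "conv_r G X xi gamma y = xi (xg_left y) * gamma (xg_right y)"
  using conv_r_ract[OF assms(1)] xg_set_factors[OF assms(2)] by metis

lemma continuous_on_conv_r:
  assumes xi: "cc_on V xi" and gamma: "cc_on W gamma"
  shows "continuous_on (xg_set G X V W) (conv_r G X xi gamma)"
proof -
  let ?S = "xg_set G X V W"
  have dom: "?S \<subseteq> anc_s X -` (src G ` W)"
    unfolding xg_set_eq by blast
  have "continuous_on ?S (\<lambda>y. xi (xg_left y) * gamma (xg_right y))"
  proof (rule continuous_on_mult)
    show "continuous_on ?S (\<lambda>y. xi (xg_left y))"
      by (rule continuous_on_compose2[OF cc_on_continuous[OF xi]
            continuous_on_subset[OF continuous_on_xg_left dom]]) (use xg_set_factors in blast)
    show "continuous_on ?S (\<lambda>y. gamma (xg_right y))"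
      by (rule continuous_on_compose2[OF cc_on_continuous[OF gamma]
            continuous_on_subset[OF continuous_on_xg_right dom]]) (use xg_set_factors in blast)
  qed
  then show ?thesis
    using conv_r_xg_set[OF gamma] continuous_on_cong by force
qed

lemma cc_on_conv_r:
  assumes xi: "cc_on V xi" and gamma: "cc_on W gamma"
  shows "cc_on (xg_set G X V W) (conv_r G X xi gamma)"
proof -
  let ?S = "xg_set G X V W"
  obtain K1 where K1: "compact K1" "K1 \<subseteq> V" "\<And>x. xi x \<noteq> 0 \<Longrightarrow> x \<in> K1"
    using cc_onE[OF xi] by blast
  obtain K2 where K2: "compact K2" "K2 \<subseteq> W" "\<And>g. gamma g \<noteq> 0 \<Longrightarrow> g \<in> K2"
    using cc_onE[OF gamma] by blast
  let ?K = "(\<lambda>(x, g). ract X x g) ` (K1 \<times> K2 \<inter> {(x, g). anc_s X x = rng G g})"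
  show ?thesis
  proof (rule cc_onI[OF continuous_on_conv_r[OF xi gamma]])
    show "compact ?K"
      by (rule compact_image_fibre_product[OF K1(1) K2(1) continuous_anc_s G.continuous_rng continuous_ract])
    show "?K \<subseteq> ?S"
      using K1(2) K2(2) by (fastforce simp: xg_set_def)
    fix y assume "conv_r G X xi gamma y \<noteq> 0"
    then have "y \<in> ?S" and "xi (xg_left y) \<noteq> 0" "gamma (xg_right y) \<noteq> 0"
      using conv_r_outside[OF xi gamma] conv_r_xg_set[OF gamma] by (metis mult_eq_0_iff)+
    then show "y \<in> ?K"
      using K1(3) K2(3) xg_set_factors[OF \<open>y \<in> ?S\<close>]
      by (auto intro!: rev_image_eqI[of "(xg_left y, xg_right y)"])
  qed
qed

end

locale bra_product = correspondence H G X
  for H :: "('h::topological_space, 'b::t2_space) groupoid"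
    and G :: "('g::topological_space, 'a::t2_space) groupoid"
    and X :: "('x::topological_space, 'h, 'b, 'g, 'a) corresp" +
  fixes V1 V2 :: "'x set"
  assumes xslice_V1: "xslice G X V1" and xslice_V2: "xslice G X V2"
begin

definition bra_left :: "'g \<Rightarrow> 'x" where
  "bra_left g = inv_into V1 (anc_s X) (rng G g)"

definition bra_right :: "'g \<Rightarrow> 'x" where
  "bra_right g = ract X (bra_left g) g"

lemma bra_factors_bra:
  assumes "x1 \<in> V1" and "same_orbit G X x1 x2"
  shows "bra_left (bra G X x1 x2) = x1" and "bra_right (bra G X x1 x2) = x2"
proof -
  show left: "bra_left (bra G X x1 x2) = x1"
    using assms same_orbit_bra xsliceD(2)[OF xslice_V1] by (metis bra_left_def inv_into_f_f)
  show "bra_right (bra G X x1 x2) = x2"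
    using assms(2) same_orbit_bra by (simp add: bra_right_def left)
qed

lemma bra_bra_factors:
  assumes "rng G g \<in> anc_s X ` V1"
  shows "bra_left g \<in> V1" and "anc_s X (bra_left g) = rng G g"
    and "same_orbit G X (bra_left g) (bra_right g)" and "bra G X (bra_left g) (bra_right g) = g"
proof -
  show "bra_left g \<in> V1" and s: "anc_s X (bra_left g) = rng G g"
    using assms by (simp_all add: bra_left_def inv_into_into f_inv_into_f)
  then show "same_orbit G X (bra_left g) (bra_right g)" "bra G X (bra_left g) (bra_right g) = g"
    by (simp_all add: bra_right_def same_orbitI bra_ract)
qed

lemma bra_set_eq: "bra_set G X V1 V2 = {g \<in> rng G -` (anc_s X ` V1). bra_right g \<in> V2}"
proof (intro equalityI subsetI)
  fix g assume "g \<in> bra_set G X V1 V2"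
  then obtain x1 x2 where "x1 \<in> V1" "x2 \<in> V2" "same_orbit G X x1 x2" "g = bra G X x1 x2"
    unfolding bra_set_def by blast
  then show "g \<in> {g \<in> rng G -` (anc_s X ` V1). bra_right g \<in> V2}"
    using bra_factors_bra same_orbit_bra by (metis (mono_tags, lifting) image_eqI mem_Collect_eq vimageI)
next
  fix g assume "g \<in> {g \<in> rng G -` (anc_s X ` V1). bra_right g \<in> V2}"
  then show "g \<in> bra_set G X V1 V2"
    using bra_bra_factors[of g] unfolding bra_set_def by force
qed

lemma bra_set_factors:
  assumes "g \<in> bra_set G X V1 V2"
  shows "bra_left g \<in> V1" "bra_right g \<in> V2" "anc_s X (bra_left g) = rng G g"
    "anc_s X (bra_right g) = src G g" "same_orbit G X (bra_left g) (bra_right g)"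
    "bra G X (bra_left g) (bra_right g) = g"
  using assms bra_bra_factors anc_s_ract unfolding bra_set_eq by (auto simp: bra_right_def)

lemma continuous_on_bra_left: "continuous_on (rng G -` (anc_s X ` V1)) bra_left"
  unfolding bra_left_def
  by (rule continuous_on_compose2[OF local_homeo_inv_into_continuous[OF local_homeo_anc_s]
        continuous_on_subset[OF G.continuous_rng]])
     (use xsliceD[OF xslice_V1] in auto)

lemma continuous_on_bra_right: "continuous_on (rng G -` (anc_s X ` V1)) bra_right"
  unfolding bra_right_def
  by (rule continuous_on_apply_pair[OF continuous_ract continuous_on_bra_left continuous_on_id])
     (use bra_bra_factors in auto)

lemma open_bra_set: "open (bra_set G X V1 V2)"
  unfolding bra_set_eq
  using continuous_on_open_vimage[THEN iffD1, OF _ continuous_on_bra_right] xsliceD(1)[OF xslice_V2]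
    open_vimage[OF local_homeo_open_map[OF local_homeo_anc_s xsliceD(1)[OF xslice_V1]] G.continuous_rng]
  by (simp add: Collect_conj_eq Int_commute vimage_def)

lemma bra_set_unique_factors:
  assumes "g \<in> bra_set G X V1 V2"
  shows "\<exists>!(x1, x2). x1 \<in> V1 \<and> x2 \<in> V2 \<and> same_orbit G X x1 x2 \<and> g = bra G X x1 x2"
proof (rule ex1I[of _ "(bra_left g, bra_right g)"])
  show "case (bra_left g, bra_right g) of (x1, x2) \<Rightarrow>
      x1 \<in> V1 \<and> x2 \<in> V2 \<and> same_orbit G X x1 x2 \<and> g = bra G X x1 x2"
    using bra_set_factors[OF assms] by simp
qed (use bra_factors_bra in auto)

lemma gslice_bra_set: "gslice G (bra_set G X V1 V2)"
  unfolding gslice_def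
proof (intro conjI)
  show "open (bra_set G X V1 V2)"
    by (rule open_bra_set)
  have factors_eq: "g = g'"
    if "g \<in> bra_set G X V1 V2" "g' \<in> bra_set G X V1 V2"
      "bra_left g = bra_left g'" "bra_right g = bra_right g'" for g g'
    using that bra_set_factors(6) by metis
  show "inj_on (src G) (bra_set G X V1 V2)"
  proof (rule inj_onI)
    fix g g' assume g: "g \<in> bra_set G X V1 V2" "g' \<in> bra_set G X V1 V2" and "src G g = src G g'"
    then have right: "bra_right g = bra_right g'"
      using inj_onD[OF xsliceD(2)[OF xslice_V2]] bra_set_factors(2,4) by metis
    then have "same_orbit G X (bra_left g) (bra_left g')"
      using bra_set_factors(5)[OF g(1)] bra_set_factors(5)[OF g(2)] same_orbit_sym same_orbit_trans
      by metis
    then have "bra_left g = bra_left g'"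
      using xsliceD(3)[OF xslice_V1] bra_set_factors(1) g by blast
    then show "g = g'"
      using factors_eq g right by blast
  qed
  show "inj_on (rng G) (bra_set G X V1 V2)"
  proof (rule inj_onI)
    fix g g' assume g: "g \<in> bra_set G X V1 V2" "g' \<in> bra_set G X V1 V2" and "rng G g = rng G g'"
    then have left: "bra_left g = bra_left g'"
      by (simp add: bra_left_def)
    then have "same_orbit G X (bra_right g) (bra_right g')"
      using bra_set_factors(5)[OF g(1)] bra_set_factors(5)[OF g(2)] same_orbit_sym same_orbit_trans
      by metis
    then have "bra_right g = bra_right g'"
      using xsliceD(3)[OF xslice_V2] bra_set_factors(2) g by blast
    then show "g = g'"
      using factors_eq g left by blast
  qed
qed

lemma inner_prod_bra:
  assumes xi: "cc_on V1 xi" and "x1 \<in> V1" and "same_orbit G X x1 x2"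
  shows "inner_prod G X xi eta (bra G X x1 x2) = cnj (xi x1) * eta x2"
proof -
  let ?g = "bra G X x1 x2"
  have x1: "anc_s X x1 = rng G ?g" "ract X x1 ?g = x2"
    using same_orbit_bra[OF assms(3)] by simp_all
  have "inner_prod G X xi eta ?g = cnj (xi x1) * eta (ract X x1 ?g)"
    unfolding inner_prod_def
  proof (rule infsum_eq_single_term)
    show "x1 \<in> {x. anc_s X x = rng G ?g}"
      using x1 by simp
    fix k assume k: "k \<in> {x. anc_s X x = rng G ?g}" "k \<noteq> x1"
    then have "k \<notin> V1"
      using inj_onD[OF xsliceD(2)[OF xslice_V1]] x1(1) \<open>x1 \<in> V1\<close> by force
    then show "cnj (xi k) * eta (ract X k ?g) = 0"
      using cc_on_vanishes[OF xi] by simp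
  qed
  then show ?thesis
    using x1 by simp
qed

lemma inner_prod_outside:
  assumes xi: "cc_on V1 xi" and eta: "cc_on V2 eta" and "g \<notin> bra_set G X V1 V2"
  shows "inner_prod G X xi eta g = 0"
  unfolding inner_prod_def
proof (rule infsum_0)
  fix k assume k: "k \<in> {x. anc_s X x = rng G g}"
  have "k \<notin> V1 \<or> ract X k g \<notin> V2"
  proof (rule ccontr)
    assume "\<not> (k \<notin> V1 \<or> ract X k g \<notin> V2)"
    moreover have "same_orbit G X k (ract X k g)" "bra G X k (ract X k g) = g"
      using k same_orbitI bra_ract by simp_all
    ultimately have "g \<in> bra_set G X V1 V2"
      unfolding bra_set_def by force
    then show False
      using assms(3) by blast
  qed
  then show "cnj (xi k) * eta (ract X k g) = 0"
    using cc_on_vanishes[OF xi] cc_on_vanishes[OF eta] by auto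
qed

lemma inner_prod_bra_set:
  assumes "cc_on V1 xi" and "g \<in> bra_set G X V1 V2"
  shows "inner_prod G X xi eta g = cnj (xi (bra_left g)) * eta (bra_right g)"
  using inner_prod_bra[OF assms(1)] bra_set_factors[OF assms(2)] by metis

lemma continuous_on_inner_prod:
  assumes xi: "cc_on V1 xi" and eta: "cc_on V2 eta"
  shows "continuous_on (bra_set G X V1 V2) (inner_prod G X xi eta)"
proof -
  let ?S = "bra_set G X V1 V2"
  have dom: "?S \<subseteq> rng G -` (anc_s X ` V1)"
    unfolding bra_set_eq by blast
  have "continuous_on ?S (\<lambda>g. cnj (xi (bra_left g)) * eta (bra_right g))"
  proof (intro continuous_on_mult continuous_on_cnj)
    show "continuous_on ?S (\<lambda>g. xi (bra_left g))"
      by (rule continuous_on_compose2[OF cc_on_continuous[OF xi]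
            continuous_on_subset[OF continuous_on_bra_left dom]]) (use bra_set_factors in blast)
    show "continuous_on ?S (\<lambda>g. eta (bra_right g))"
      by (rule continuous_on_compose2[OF cc_on_continuous[OF eta]
            continuous_on_subset[OF continuous_on_bra_right dom]]) (use bra_set_factors in blast)
  qed
  then show ?thesis
    using inner_prod_bra_set[OF xi] continuous_on_cong by force
qed

lemma cc_on_inner_prod:
  assumes xi: "cc_on V1 xi" and eta: "cc_on V2 eta"
  shows "cc_on (bra_set G X V1 V2) (inner_prod G X xi eta)"
proof -
  let ?S = "bra_set G X V1 V2"
  obtain K1 where K1: "compact K1" "K1 \<subseteq> V1" "\<And>x. xi x \<noteq> 0 \<Longrightarrow> x \<in> K1"
    using cc_onE[OF xi] by blast
  obtain K2 where K2: "compact K2" "K2 \<subseteq> V2" "\<And>x. eta x \<noteq> 0 \<Longrightarrow> x \<in> K2"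
    using cc_onE[OF eta] by blast
  let ?P = "{(x, g). anc_s X x = rng G g \<and> ract X x g \<in> K2 \<and> x \<in> K1}"
  show ?thesis
  proof (rule cc_onI[OF continuous_on_inner_prod[OF xi eta]])
    show "compact (snd ` ?P)"
      using compact_ract_preimage[OF K2(1) K1(1)] compact_continuous_image continuous_on_snd
        continuous_on_id by blast
    show "snd ` ?P \<subseteq> ?S"
    proof
      fix g assume "g \<in> snd ` ?P"
      then obtain x where x: "anc_s X x = rng G g" "ract X x g \<in> K2" "x \<in> K1"
        by force
      then have "same_orbit G X x (ract X x g)" "bra G X x (ract X x g) = g"
        using same_orbitI bra_ract by simp_all
      then show "g \<in> ?S"
        using x K1(2) K2(2) unfolding bra_set_def by force
    qed
    fix g assume "inner_prod G X xi eta g \<noteq> 0"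
    then have "g \<in> ?S" and "xi (bra_left g) \<noteq> 0" "eta (bra_right g) \<noteq> 0"
      using inner_prod_outside[OF xi eta] inner_prod_bra_set[OF xi]
      by (metis complex_cnj_zero_iff mult_eq_0_iff)+
    then show "g \<in> snd ` ?P"
      using K1(3) K2(3) bra_set_factors[OF \<open>g \<in> ?S\<close>]
      by (auto simp: bra_right_def intro!: rev_image_eqI[of "(bra_left g, g)"])
  qed
qed

end

locale hx_product = correspondence H G X
  for H :: "('h::topological_space, 'b::t2_space) groupoid"
    and G :: "('g::topological_space, 'a::t2_space) groupoid"
    and X :: "('x::topological_space, 'h, 'b, 'g, 'a) corresp" +
  fixes Z :: "'h set" and V :: "'x set"
  assumes gslice_Z: "gslice H Z" and xslice_V: "xslice G X V"
begin

definition hx_left :: "'x \<Rightarrow> 'h" where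
  "hx_left y = inv_into Z (rng H) (anc_r X y)"

definition hx_right :: "'x \<Rightarrow> 'x" where
  "hx_right y = lact X (ginv H (hx_left y)) y"

lemma hx_factors_lact:
  assumes "h \<in> Z" and "src H h = anc_r X x"
  shows "hx_left (lact X h x) = h" and "hx_right (lact X h x) = x"
proof -
  show left: "hx_left (lact X h x) = h"
    using assms anc_r_lact gsliceD(3)[OF gslice_Z] by (simp add: hx_left_def)
  show "hx_right (lact X h x) = x"
    using assms lact_ginv_lact by (simp add: hx_right_def left)
qed

lemma lact_hx_factors:
  assumes "anc_r X y \<in> rng H ` Z"
  shows "hx_left y \<in> Z" and "rng H (hx_left y) = anc_r X y"
    and "src H (hx_left y) = anc_r X (hx_right y)" and "anc_s X (hx_right y) = anc_s X y"
    and "lact X (hx_left y) (hx_right y) = y"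
proof -
  show "hx_left y \<in> Z" and rng: "rng H (hx_left y) = anc_r X y"
    using assms by (simp_all add: hx_left_def inv_into_into f_inv_into_f)
  then show "src H (hx_left y) = anc_r X (hx_right y)" "anc_s X (hx_right y) = anc_s X y"
    "lact X (hx_left y) (hx_right y) = y"
    by (simp_all add: hx_right_def anc_r_lact anc_s_lact lact_lact_ginv)
qed

lemma hx_set_eq: "hx_set H X Z V = {y \<in> anc_r X -` (rng H ` Z). hx_right y \<in> V}"
proof (intro equalityI subsetI)
  fix y assume "y \<in> hx_set H X Z V"
  then obtain h x where "h \<in> Z" "x \<in> V" "src H h = anc_r X x" "y = lact X h x"
    unfolding hx_set_def by blast
  then show "y \<in> {y \<in> anc_r X -` (rng H ` Z). hx_right y \<in> V}"
    using hx_factors_lact anc_r_lact by auto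
next
  fix y assume "y \<in> {y \<in> anc_r X -` (rng H ` Z). hx_right y \<in> V}"
  then show "y \<in> hx_set H X Z V"
    using lact_hx_factors[of y] unfolding hx_set_def by force
qed

lemma hx_set_factors:
  assumes "y \<in> hx_set H X Z V"
  shows "hx_left y \<in> Z" "hx_right y \<in> V" "src H (hx_left y) = anc_r X (hx_right y)"
    "anc_s X (hx_right y) = anc_s X y" "lact X (hx_left y) (hx_right y) = y"
  using assms lact_hx_factors unfolding hx_set_eq by auto

lemma continuous_on_hx_left: "continuous_on (anc_r X -` (rng H ` Z)) hx_left"
  unfolding hx_left_def
  by (rule continuous_on_compose2[OF local_homeo_inv_into_continuous[OF H.local_homeo_rng]
        continuous_on_subset[OF continuous_anc_r]])
     (use gsliceD[OF gslice_Z] in auto)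

lemma continuous_on_hx_right: "continuous_on (anc_r X -` (rng H ` Z)) hx_right"
  unfolding hx_right_def
proof (rule continuous_on_apply_pair[OF continuous_lact _ continuous_on_id])
  show "continuous_on (anc_r X -` (rng H ` Z)) (\<lambda>y. ginv H (hx_left y))"
    by (rule continuous_on_compose2[OF H.continuous_ginv continuous_on_hx_left]) auto
qed (use lact_hx_factors in auto)

lemma open_hx_set: "open (hx_set H X Z V)"
  unfolding hx_set_eq
  using continuous_on_open_vimage[THEN iffD1, OF _ continuous_on_hx_right] xsliceD(1)[OF xslice_V]
    open_vimage[OF local_homeo_open_map[OF H.local_homeo_rng gsliceD(1)[OF gslice_Z]] continuous_anc_r]
  by (simp add: Collect_conj_eq Int_commute vimage_def)

lemma hx_set_unique_factors:
  assumes "y \<in> hx_set H X Z V"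
  shows "\<exists>!(h, x). h \<in> Z \<and> x \<in> V \<and> src H h = anc_r X x \<and> y = lact X h x"
proof (rule ex1I[of _ "(hx_left y, hx_right y)"])
  show "case (hx_left y, hx_right y) of (h, x) \<Rightarrow> h \<in> Z \<and> x \<in> V \<and> src H h = anc_r X x \<and> y = lact X h x"
    using hx_set_factors[OF assms] by simp
qed (use hx_factors_lact in auto)

lemma xslice_hx_set: "xslice G X (hx_set H X Z V)"
  unfolding xslice_def
proof (intro conjI ballI impI)
  show "open (hx_set H X Z V)"
    by (rule open_hx_set)
  have factors_eq: "y = y'"
    if "y \<in> hx_set H X Z V" "y' \<in> hx_set H X Z V" "hx_left y = hx_left y'" "hx_right y = hx_right y'"
    for y y'
    using that hx_set_factors(5) by metis
  show "inj_on (anc_s X) (hx_set H X Z V)"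
  proof (rule inj_onI)
    fix y y' assume y: "y \<in> hx_set H X Z V" "y' \<in> hx_set H X Z V" and "anc_s X y = anc_s X y'"
    then have right: "hx_right y = hx_right y'"
      using inj_onD[OF xsliceD(2)[OF xslice_V]] hx_set_factors(2,4) by metis
    then have "hx_left y = hx_left y'"
      using inj_onD[OF gsliceD(2)[OF gslice_Z]] hx_set_factors(1,3) y by metis
    then show "y = y'"
      using factors_eq y right by blast
  qed
  fix y y' assume y: "y \<in> hx_set H X Z V" "y' \<in> hx_set H X Z V" and "same_orbit G X y y'"
  then obtain k where k: "anc_s X y = rng G k" "y' = ract X y k"
    unfolding same_orbit_def by blast
  then have left: "hx_left y = hx_left y'"
    by (simp add: hx_left_def anc_r_ract)
  have "hx_right y' = lact X (ginv H (hx_left y)) (ract X y k)"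
    by (simp add: hx_right_def left k(2))
  also have "\<dots> = ract X (hx_right y) k"
    using ract_lact_commute[of "ginv H (hx_left y)" y k] lact_hx_factors(2) hx_set_eq y(1) k(1)
    by (simp add: hx_right_def)
  finally have "same_orbit G X (hx_right y) (hx_right y')"
    using same_orbitI hx_set_factors(4)[OF y(1)] k(1) by simp
  then have "hx_right y = hx_right y'"
    using xsliceD(3)[OF xslice_V] hx_set_factors(2) y by blast
  then show "y = y'"
    using factors_eq y left by blast
qed

lemma conv_l_lact:
  assumes zeta: "cc_on Z zeta" and "h \<in> Z" and "src H h = anc_r X x"
  shows "conv_l H X zeta xi (lact X h x) = zeta h * xi x"
proof -
  have "conv_l H X zeta xi (lact X h x) = zeta h * xi (lact X (ginv H h) (lact X h x))"
    unfolding conv_l_def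
  proof (rule infsum_eq_single_term)
    show "h \<in> {k. rng H k = anc_r X (lact X h x)}"
      using assms anc_r_lact by simp
    fix k assume k: "k \<in> {k. rng H k = anc_r X (lact X h x)}" "k \<noteq> h"
    then have "k \<notin> Z"
      using inj_onD[OF gsliceD(3)[OF gslice_Z]] assms anc_r_lact by force
    then show "zeta k * xi (lact X (ginv H k) (lact X h x)) = 0"
      using cc_on_vanishes[OF zeta] by simp
  qed
  then show ?thesis
    using assms lact_ginv_lact by simp
qed

lemma conv_l_outside:
  assumes zeta: "cc_on Z zeta" and xi: "cc_on V xi" and "y \<notin> hx_set H X Z V"
  shows "conv_l H X zeta xi y = 0"
  unfolding conv_l_def
proof (rule infsum_0)
  fix k assume k: "k \<in> {k. rng H k = anc_r X y}"
  have "k \<notin> Z \<or> lact X (ginv H k) y \<notin> V"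
  proof (rule ccontr)
    assume "\<not> (k \<notin> Z \<or> lact X (ginv H k) y \<notin> V)"
    moreover have "src H k = anc_r X (lact X (ginv H k) y)" "y = lact X k (lact X (ginv H k) y)"
      using k anc_r_lact lact_lact_ginv by simp_all
    ultimately have "y \<in> hx_set H X Z V"
      unfolding hx_set_def by force
    then show False
      using assms(3) by blast
  qed
  then show "zeta k * xi (lact X (ginv H k) y) = 0"
    using cc_on_vanishes[OF zeta] cc_on_vanishes[OF xi] by auto
qed

lemma conv_l_hx_set:
  assumes "cc_on Z zeta" and "y \<in> hx_set H X Z V"
  shows "conv_l H X zeta xi y = zeta (hx_left y) * xi (hx_right y)"
  using conv_l_lact[OF assms(1)] hx_set_factors[OF assms(2)] by metis

lemma continuous_on_conv_l:
  assumes zeta: "cc_on Z zeta" and xi: "cc_on V xi"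
  shows "continuous_on (hx_set H X Z V) (conv_l H X zeta xi)"
proof -
  let ?S = "hx_set H X Z V"
  have dom: "?S \<subseteq> anc_r X -` (rng H ` Z)"
    unfolding hx_set_eq by blast
  have "continuous_on ?S (\<lambda>y. zeta (hx_left y) * xi (hx_right y))"
  proof (rule continuous_on_mult)
    show "continuous_on ?S (\<lambda>y. zeta (hx_left y))"
      by (rule continuous_on_compose2[OF cc_on_continuous[OF zeta]
            continuous_on_subset[OF continuous_on_hx_left dom]]) (use hx_set_factors in blast)
    show "continuous_on ?S (\<lambda>y. xi (hx_right y))"
      by (rule continuous_on_compose2[OF cc_on_continuous[OF xi]
            continuous_on_subset[OF continuous_on_hx_right dom]]) (use hx_set_factors in blast)
  qed
  then show ?thesis
    using conv_l_hx_set[OF zeta] continuous_on_cong by force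
qed

lemma cc_on_conv_l:
  assumes zeta: "cc_on Z zeta" and xi: "cc_on V xi"
  shows "cc_on (hx_set H X Z V) (conv_l H X zeta xi)"
proof -
  let ?S = "hx_set H X Z V"
  obtain K1 where K1: "compact K1" "K1 \<subseteq> Z" "\<And>h. zeta h \<noteq> 0 \<Longrightarrow> h \<in> K1"
    using cc_onE[OF zeta] by blast
  obtain K2 where K2: "compact K2" "K2 \<subseteq> V" "\<And>x. xi x \<noteq> 0 \<Longrightarrow> x \<in> K2"
    using cc_onE[OF xi] by blast
  let ?K = "(\<lambda>(h, x). lact X h x) ` (K1 \<times> K2 \<inter> {(h, x). src H h = anc_r X x})"
  show ?thesis
  proof (rule cc_onI[OF continuous_on_conv_l[OF zeta xi]])
    show "compact ?K"
      by (rule compact_image_fibre_product[OF K1(1) K2(1) H.continuous_src continuous_anc_r continuous_lact])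
    show "?K \<subseteq> ?S"
      using K1(2) K2(2) by (fastforce simp: hx_set_def)
    fix y assume "conv_l H X zeta xi y \<noteq> 0"
    then have "y \<in> ?S" and "zeta (hx_left y) \<noteq> 0" "xi (hx_right y) \<noteq> 0"
      using conv_l_outside[OF zeta xi] conv_l_hx_set[OF zeta] by (metis mult_eq_0_iff)+
    then show "y \<in> ?K"
      using K1(3) K2(3) hx_set_factors[OF \<open>y \<in> ?S\<close>]
      by (auto intro!: rev_image_eqI[of "(hx_left y, hx_right y)"])
  qed
qed

end

theorem lemma7p4:
  fixes H :: "('h::topological_space, 'b::t2_space) groupoid"
    and G :: "('g::topological_space, 'a::t2_space) groupoid"
    and X :: "('x::topological_space, 'h, 'b, 'g, 'a) corresp"
    and V1 V2 :: "'x set" and W :: "'g set" and Z :: "'h set"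
    and xi eta :: "'x \<Rightarrow> complex" and gamma :: "'g \<Rightarrow> complex" and zeta :: "'h \<Rightarrow> complex"
  assumes corr: "groupoid_corresp H G X"
    and V1: "xslice G X V1" and V2: "xslice G X V2"
    and W: "gslice G W" and Z: "gslice H Z"
    and xi: "cc_on V1 xi" and eta: "cc_on V2 eta"
    and gamma: "cc_on W gamma" and zeta: "cc_on Z zeta"
  shows "xslice G X (xg_set G X V1 W) \<and> gslice G (bra_set G X V1 V2) \<and> xslice G X (hx_set H X Z V1)
    \<and> (\<forall>y\<in>xg_set G X V1 W. \<exists>!(x, g). x \<in> V1 \<and> g \<in> W \<and> anc_s X x = rng G g \<and> ract X x g = y)
    \<and> cc_on (xg_set G X V1 W) (conv_r G X xi gamma)
    \<and> (\<forall>x\<in>V1. \<forall>g\<in>W. anc_s X x = rng G g \<longrightarrow> conv_r G X xi gamma (ract X x g) = xi x * gamma g)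
    \<and> (\<forall>g\<in>bra_set G X V1 V2. \<exists>!(x1, x2). x1 \<in> V1 \<and> x2 \<in> V2 \<and> same_orbit G X x1 x2 \<and> g = bra G X x1 x2)
    \<and> cc_on (bra_set G X V1 V2) (inner_prod G X xi eta)
    \<and> (\<forall>x1\<in>V1. \<forall>x2\<in>V2. same_orbit G X x1 x2 \<longrightarrow> inner_prod G X xi eta (bra G X x1 x2) = cnj (xi x1) * eta x2)
    \<and> (\<forall>y\<in>hx_set H X Z V1. \<exists>!(h, x). h \<in> Z \<and> x \<in> V1 \<and> src H h = anc_r X x \<and> y = lact X h x)
    \<and> cc_on (hx_set H X Z V1) (conv_l H X zeta xi)
    \<and> (\<forall>h\<in>Z. \<forall>x\<in>V1. src H h = anc_r X x \<longrightarrow> conv_l H X zeta xi (lact X h x) = zeta h * xi x)"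
proof -
  interpret VW: xg_product H G X V1 W
    by (intro xg_product.intro xg_product_axioms.intro correspondence.intro corr V1 W)
  interpret V1V2: bra_product H G X V1 V2
    by (intro bra_product.intro bra_product_axioms.intro correspondence.intro corr V1 V2)
  interpret ZV: hx_product H G X Z V1
    by (intro hx_product.intro hx_product_axioms.intro correspondence.intro corr Z V1)
  show ?thesis
    by (intro conjI ballI impI VW.xslice_xg_set VW.xg_set_unique_factors VW.cc_on_conv_r[OF xi gamma]
        VW.conv_r_ract[OF gamma] V1V2.gslice_bra_set V1V2.bra_set_unique_factors
        V1V2.cc_on_inner_prod[OF xi eta] V1V2.inner_prod_bra[OF xi] ZV.xslice_hx_set
        ZV.hx_set_unique_factors ZV.cc_on_conv_l[OF zeta xi] ZV.conv_l_lact[OF zeta])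
qed

end
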